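(* Let $\ell$ be a positive integer, let $P$ be a path, and let $(Q_1,\ldots,Q_r)$ be an extension of $P$. Let $H=P\cup\bigcup_{s=1}^{r}Q_s$ and assume that every long cycle in $H$ has length at least $2\ell$. Then every cycle in $H$ is short.
   Context: A cycle is short if its length (number of edges) is less than $\ell$ and long otherwise. For a path $P$ with endvertices $u,v$, $\le_P$ denotes the total order on $V(P)$ given by distance from $u$ along $P$, and $xPy$ denotes the subpath of $P$ between $x,y\in V(P)$. For a subgraph $H$, an $H$-path is a path with two distinct endvertices in $H$ that is internally disjoint from $H$; a path of length $1$ between two vertices of $H$ is an $H$-path only if its edge is not in $E(H)$. Let $Q_1,\ldots,Q_r$ be $P$-paths and let $u_i,v_i$ be the endvertices of $Q_i$ with $u_i<_Pv_i$. The tuple $(Q_1,\ldots,Q_r)$ is an extension of $P$ if: (E1) $Q_1,\ldots,Q_r$ are pairwise internally disjoint; (E2) the cycle $u_iPv_i\cup Q_i$ is short for every $i$; (E3) $u_1=u$ and $v_r=v$; (E4) $u_i<_Pu_{i+1}<_Pv_i<_Pv_{i+1}$ for $i=1,\ldots,r-1$; (E5) $v_i\le_P u_{i+2}$ for $i=1,\ldots,r-2$. *)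

theory Defs
  imports Main
begin

text \<open>Paths and cycles are represented as lists of distinct vertices.
  A path P = [u, ..., v] has endvertices u = hd P and v = last P; the order
  \<le>_P is the order of positions in the list (distance from u along P).\<close>

definition path_edges :: "'a list \<Rightarrow> 'a set set" where
  "path_edges xs = {{xs ! i, xs ! Suc i} | i. Suc i < length xs}"

definition is_path :: "'a list \<Rightarrow> bool" where
  "is_path xs \<longleftrightarrow> xs \<noteq> [] \<and> distinct xs"

definition pos :: "'a list \<Rightarrow> 'a \<Rightarrow> nat" where
  "pos P x = (THE i. i < length P \<and> P ! i = x)"

definition inner :: "'a list \<Rightarrow> 'a set" where
  "inner xs = set (butlast (tl xs))"

definition is_H_path :: "'a list \<Rightarrow> 'a list \<Rightarrow> bool" where
  "is_H_path P Q \<longleftrightarrow> is_path Q \<and> length Q \<ge> 2 \<and>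
     hd Q \<in> set P \<and> last Q \<in> set P \<and> inner Q \<inter> set P = {} \<and>
     (length Q = 2 \<longrightarrow> {hd Q, last Q} \<notin> path_edges P)"

definition lo :: "'a list \<Rightarrow> 'a list \<Rightarrow> 'a" where
  "lo P Q = (if pos P (hd Q) < pos P (last Q) then hd Q else last Q)"

definition hi :: "'a list \<Rightarrow> 'a list \<Rightarrow> 'a" where
  "hi P Q = (if pos P (hd Q) < pos P (last Q) then last Q else hd Q)"

text \<open>Length (number of edges) of the cycle u_i P v_i \<union> Q_i.\<close>
definition ext_cycle_len :: "'a list \<Rightarrow> 'a list \<Rightarrow> nat" where
  "ext_cycle_len P Q = (pos P (hi P Q) - pos P (lo P Q)) + (length Q - 1)"

text \<open>Extension (Q_1,...,Q_r) of P, with the tuple given as a list indexed from 0.\<close>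
definition extension :: "nat \<Rightarrow> 'a list \<Rightarrow> 'a list list \<Rightarrow> bool" where
  "extension l P Qs \<longleftrightarrow>
     is_path P \<and> length Qs \<ge> 1 \<and> (\<forall>Q\<in>set Qs. is_H_path P Q) \<and>
     (\<forall>i<length Qs. \<forall>j<length Qs. i \<noteq> j \<longrightarrow> inner (Qs!i) \<inter> set (Qs!j) = {}) \<and>
     (\<forall>i<length Qs. ext_cycle_len P (Qs!i) < l) \<and>
     lo P (Qs!0) = hd P \<and> hi P (Qs!(length Qs - 1)) = last P \<and>
     (\<forall>i. Suc i < length Qs \<longrightarrow>
        pos P (lo P (Qs!i)) < pos P (lo P (Qs!Suc i)) \<and>
        pos P (lo P (Qs!Suc i)) < pos P (hi P (Qs!i)) \<and>
        pos P (hi P (Qs!i)) < pos P (hi P (Qs!Suc i))) \<and>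
     (\<forall>i. Suc (Suc i) < length Qs \<longrightarrow>
        pos P (hi P (Qs!i)) \<le> pos P (lo P (Qs!Suc (Suc i))))"

definition H_verts :: "'a list \<Rightarrow> 'a list list \<Rightarrow> 'a set" where
  "H_verts P Qs = set P \<union> (\<Union>Q\<in>set Qs. set Q)"

definition H_edges :: "'a list \<Rightarrow> 'a list list \<Rightarrow> 'a set set" where
  "H_edges P Qs = path_edges P \<union> (\<Union>Q\<in>set Qs. path_edges Q)"

definition is_cycle_in :: "'a set \<Rightarrow> 'a set set \<Rightarrow> 'a list \<Rightarrow> bool" where
  "is_cycle_in V E C \<longleftrightarrow> distinct C \<and> length C \<ge> 3 \<and> set C \<subseteq> V \<and>
     path_edges C \<subseteq> E \<and> {last C, hd C} \<in> E"

end

theory Submission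
  imports Defs
begin

text \<open>Every edge of H lies on P or on some Q_k, and the inner vertices of Q_k have degree 2.
  Hence a cycle of H contains all or none of the edges of each Q_k, and a parity count over
  the cuts of P shows that it is determined by the set of Q_k it contains. Since a cycle stays
  connected after removing one vertex, this set is an interval {i..j}. For every interval we
  build such a cycle explicitly by adding Q_i, Q_(i+1), ... one at a time: adding Q_(j+1) to a
  short cycle through Q_i, ..., Q_j costs less than the length of the short cycle
  u_(j+1) P v_(j+1) \<union> Q_(j+1), so the new cycle has length below 2l and is short by the gap
  hypothesis. Every cycle of H has the same edges as the constructed cycle for its interval,
  so it is short as well.\<close>

section \<open>Paths and cycles as vertex lists\<close>

lemma path_edges_conv_image:
  "path_edges xs = (\<lambda>i. {xs ! i, xs ! Suc i}) ` {..<length xs - 1}"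
  by (auto simp: path_edges_def)

lemma path_edges_Nil [simp]: "path_edges [] = {}"
  and path_edges_singleton [simp]: "path_edges [x] = {}"
  by (simp_all add: path_edges_def)

lemma path_edges_Cons_Cons [simp]:
  "path_edges (x # y # zs) = insert {x, y} (path_edges (y # zs))"
  by (simp add: path_edges_conv_image lessThan_Suc_eq_insert_0 image_image)

lemma path_edges_Cons:
  "path_edges (x # xs) = (if xs = [] then {} else insert {x, hd xs} (path_edges xs))"
  by (cases xs) auto

lemma path_edges_append:
  "path_edges (xs @ ys) = path_edges xs \<union> path_edges ys \<union>
     (if xs \<noteq> [] \<and> ys \<noteq> [] then {{last xs, hd ys}} else {})"
  by (induction xs) (auto simp: path_edges_Cons)

lemma path_edges_append_nonempty:
  "ys \<noteq> [] \<Longrightarrow> path_edges (xs @ ys) = path_edges (xs @ [hd ys]) \<union> path_edges ys"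
  by (cases "xs = []") (auto simp: path_edges_append path_edges_Cons)

lemma path_edges_rev [simp]: "path_edges (rev xs) = path_edges xs"
  by (induction xs) (auto simp: path_edges_append path_edges_Cons last_rev insert_commute)

lemma path_edge_subset_set: "e \<in> path_edges xs \<Longrightarrow> e \<subseteq> set xs"
  by (auto simp: path_edges_def)

lemma finite_path_edges [simp]: "finite (path_edges xs)"
  by (simp add: path_edges_conv_image)

lemma card_path_edges: "distinct xs \<Longrightarrow> card (path_edges xs) = length xs - 1"
proof (induction xs rule: induct_list012)
  case (3 x y zs)
  have "{x, y} \<notin> path_edges (y # zs)"
    using path_edge_subset_set[of "{x, y}" "y # zs"] "3.prems" by auto
  with 3 show ?case by simp
qed simp_all

lemma path_edges_take: "path_edges (take n xs) \<subseteq> path_edges xs"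
  and path_edges_drop: "path_edges (drop n xs) \<subseteq> path_edges xs"
  using path_edges_append[of "take n xs" "drop n xs"] by auto

lemma ex_path_edge_at_vertex:
  assumes "2 \<le> length xs" and "v \<in> set xs"
  shows "\<exists>e\<in>path_edges xs. v \<in> e"
proof -
  obtain i where i: "i < length xs" "v = xs ! i"
    using assms(2) by (auto simp: in_set_conv_nth)
  show ?thesis
  proof (cases "Suc i < length xs")
    case True
    with i show ?thesis by (auto simp: path_edges_def)
  next
    case False
    then have "Suc (i - 1) < length xs" and "Suc (i - 1) = i"
      using i assms(1) by auto
    with i show ?thesis
      unfolding path_edges_def by (metis (mono_tags, lifting) insertCI mem_Collect_eq)
  qed
qed

definition cycle_edges :: "'a list \<Rightarrow> 'a set set" where
  "cycle_edges C = insert {last C, hd C} (path_edges C)"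

lemma closing_edge_notin_path_edges:
  assumes "distinct C" and "3 \<le> length C"
  shows "{last C, hd C} \<notin> path_edges C"
proof
  assume "{last C, hd C} \<in> path_edges C"
  moreover have ne: "C \<noteq> []"
    using assms(2) by auto
  ultimately obtain i where i: "{C ! (length C - 1), C ! 0} = {C ! i, C ! Suc i}" "Suc i < length C"
    unfolding path_edges_def by (auto simp: hd_conv_nth last_conv_nth)
  have inj: "p = q" if "p < length C" "q < length C" "C ! p = C ! q" for p q
    using assms(1) that by (simp add: nth_eq_iff_index_eq)
  from i(1) consider "C ! 0 = C ! Suc i" | "C ! (length C - 1) = C ! Suc i" "C ! 0 = C ! i"
    by (auto simp: doubleton_eq_iff)
  then show False
  proof cases
    case 1
    then show False using inj[of 0 "Suc i"] i(2) ne by auto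
  next
    case 2
    then have "length C - 1 = Suc i" and "0 = i"
      using inj[of "length C - 1" "Suc i"] inj[of 0 i] i(2) ne by auto
    with assms(2) show False by simp
  qed
qed

lemma card_cycle_edges: "distinct C \<Longrightarrow> 3 \<le> length C \<Longrightarrow> card (cycle_edges C) = length C"
  using closing_edge_notin_path_edges[of C] card_path_edges[of C] by (simp add: cycle_edges_def)

lemma cycle_edge_subset_set: "C \<noteq> [] \<Longrightarrow> e \<in> cycle_edges C \<Longrightarrow> e \<subseteq> set C"
  by (auto simp: cycle_edges_def dest: path_edge_subset_set)

definition crosses :: "'a set \<Rightarrow> 'a set \<Rightarrow> bool" where
  "crosses S e \<longleftrightarrow> (\<exists>x\<in>e. x \<in> S) \<and> (\<exists>y\<in>e. y \<notin> S)"

lemma crosses_doubleton [simp]: "crosses S {x, y} \<longleftrightarrow> (x \<in> S) \<noteq> (y \<in> S)"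
  by (auto simp: crosses_def)

lemma even_card_crossing_path_edges_iff:
  assumes "distinct xs" and "xs \<noteq> []"
  shows "even (card {e \<in> path_edges xs. crosses S e}) \<longleftrightarrow> ((hd xs \<in> S) = (last xs \<in> S))"
  using assms
proof (induction xs rule: induct_list012)
  case (3 x y zs)
  have new: "{x, y} \<notin> path_edges (y # zs)"
    using path_edge_subset_set[of "{x, y}" "y # zs"] "3.prems" by auto
  have "{e \<in> path_edges (x # y # zs). crosses S e} =
      (if crosses S {x, y} then insert {x, y} else id) {e \<in> path_edges (y # zs). crosses S e}"
    by auto
  with new "3.IH" "3.prems" show ?case by auto
qed simp_all

lemma even_card_crossing_cycle_edges:
  assumes "distinct C" and "3 \<le> length C"
  shows "even (card {e \<in> cycle_edges C. crosses S e})"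
proof -
  have "{e \<in> cycle_edges C. crosses S e} =
      (if crosses S {last C, hd C} then insert {last C, hd C} else id) {e \<in> path_edges C. crosses S e}"
    by (auto simp: cycle_edges_def)
  moreover have "C \<noteq> []"
    using assms(2) by auto
  ultimately show ?thesis
    using closing_edge_notin_path_edges[OF assms] even_card_crossing_path_edges_iff[OF assms(1)]
    by auto
qed

lemma path_edge_leaving:
  "x \<in> set xs \<Longrightarrow> x \<in> L \<Longrightarrow> y \<in> set xs \<Longrightarrow> y \<notin> L \<Longrightarrow>
    \<exists>u v. {u, v} \<in> path_edges xs \<and> u \<in> L \<and> v \<notin> L"
proof (induction xs arbitrary: x y rule: induct_list012)
  case (3 z w ws)
  have zw: "{z, w} \<in> path_edges (z # w # ws)" and wz: "{w, z} \<in> path_edges (z # w # ws)"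
    by (simp_all add: insert_commute)
  consider "z \<in> L" "w \<notin> L" | "z \<notin> L" "w \<in> L" | "z \<in> L \<longleftrightarrow> w \<in> L"
    by blast
  then show ?case
  proof cases
    case 3
    show ?thesis
    proof (cases "z \<in> L")
      case True
      then show ?thesis
        using 3 "3.IH"(2)[of w y] "3.prems" by fastforce
    next
      case False
      then show ?thesis
        using 3 "3.IH"(2)[of x w] "3.prems" by fastforce
    qed
  qed (use zw wz in blast)+
qed auto

text \<open>Removing a vertex from a cycle leaves a path, which is connected.\<close>

lemma cycle_edge_leaving_avoiding:
  assumes "distinct C" and "w \<notin> L" and "x \<in> set C" "x \<in> L" and "y \<in> set C" "y \<notin> L" "y \<noteq> w"
  obtains u v where "{u, v} \<in> cycle_edges C" "u \<in> L" "v \<notin> L" "v \<noteq> w"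
proof (cases "w \<in> set C")
  case False
  obtain u v where "{u, v} \<in> path_edges C" "u \<in> L" "v \<notin> L"
    using path_edge_leaving[OF assms(3-6)] by blast
  moreover have "v \<noteq> w"
    using False path_edge_subset_set[OF calculation(1)] by auto
  ultimately show ?thesis
    using that by (auto simp: cycle_edges_def)
next
  case True
  then obtain xs ys where C: "C = xs @ w # ys"
    by (meson split_list)
  obtain u v where uv: "{u, v} \<in> path_edges (ys @ xs)" "u \<in> L" "v \<notin> L"
    using path_edge_leaving[of x "ys @ xs" L y] assms C by auto
  have "v \<noteq> w"
    using path_edge_subset_set[OF uv(1)] assms(1) C by auto
  moreover have "path_edges (ys @ xs) \<subseteq> cycle_edges C"
    using C path_edges_Cons[of w ys] by (auto simp: cycle_edges_def path_edges_append)
  ultimately show ?thesis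
    using that uv by blast
qed

lemma inner_subset_set: "inner xs \<subseteq> set xs"
  by (cases xs) (auto simp: inner_def dest: in_set_butlastD)

lemma inner_conv_nth: "x \<in> inner xs \<longleftrightarrow> (\<exists>i. 0 < i \<and> i < length xs - 1 \<and> x = xs ! i)"
proof
  assume "x \<in> inner xs"
  then obtain j where "j < length (butlast (tl xs))" "x = butlast (tl xs) ! j"
    by (auto simp: inner_def in_set_conv_nth)
  then show "\<exists>i. 0 < i \<and> i < length xs - 1 \<and> x = xs ! i"
    by (intro exI[of _ "Suc j"]) (auto simp: nth_butlast nth_tl)
next
  assume "\<exists>i. 0 < i \<and> i < length xs - 1 \<and> x = xs ! i"
  then obtain i where i: "0 < i" "i < length xs - 1" "x = xs ! i"
    by blast
  then have "i - 1 < length (butlast (tl xs))" "butlast (tl xs) ! (i - 1) = xs ! i"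
    by (auto simp: nth_butlast nth_tl)
  with i(3) show "x \<in> inner xs"
    unfolding inner_def by (metis nth_mem)
qed

lemma set_eq_ends_Un_inner: "2 \<le> length xs \<Longrightarrow> set xs = {hd xs, last xs} \<union> inner xs"
proof (cases xs rule: rev_cases)
  case (snoc ys y)
  moreover assume "2 \<le> length xs"
  ultimately obtain z zs where "ys = z # zs"
    by (cases ys) auto
  with snoc show ?thesis
    by (auto simp: inner_def)
qed simp

lemma set_butlast_distinct: "distinct xs \<Longrightarrow> set (butlast xs) = set xs - {last xs}"
  by (cases xs rule: rev_cases) auto

lemma hd_butlast: "2 \<le> length xs \<Longrightarrow> hd (butlast xs) = hd xs"
  by (cases xs) auto

lemma nth_in_set_take_iff: "distinct xs \<Longrightarrow> q < length xs \<Longrightarrow> xs ! q \<in> set (take n xs) \<longleftrightarrow> q < n"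
  by (auto simp: in_set_conv_nth nth_eq_iff_index_eq)

lemma UN_set_conv_nth: "(\<Union>x\<in>set xs. f x) = (\<Union>i<length xs. f (xs ! i))"
  by (auto simp: in_set_conv_nth intro: nth_mem)

lemma ex_consecutive_neq:
  assumes "s < n" "t < n" "f s \<noteq> f t"
  shows "\<exists>i. Suc i < n \<and> f i \<noteq> f (Suc i)"
proof (rule ccontr)
  assume "\<not> ?thesis"
  then have "f i = f 0" if "i < n" for i
    using that by (induction i) auto
  with assms show False
    by metis
qed

lemma lift_Suc_mono_less_below:
  assumes "\<And>k. Suc k < n \<Longrightarrow> f k < (f (Suc k) :: nat)" and "k < k'" "k' < n"
  shows "f k < f k'"
  using assms(2,3)
proof (induction k')
  case (Suc k')
  with assms(1)[of k'] show ?case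
    by (cases "k = k'") auto
qed simp

section \<open>The graph of an extension\<close>

locale extension_graph =
  fixes l :: nat and P :: "'a list" and Qs :: "'a list list"
  assumes extension: "extension l P Qs"
begin

abbreviation r :: nat where
  "r \<equiv> length Qs"

abbreviation V :: "'a set" where
  "V \<equiv> H_verts P Qs"

abbreviation E :: "'a set set" where
  "E \<equiv> H_edges P Qs"

abbreviation H_cycle :: "'a list \<Rightarrow> bool" where
  "H_cycle C \<equiv> is_cycle_in V E C"

definition a :: "nat \<Rightarrow> nat" where
  "a k = pos P (lo P (Qs ! k))"

definition b :: "nat \<Rightarrow> nat" where
  "b k = pos P (hi P (Qs ! k))"

definition Q_edges :: "'a set set" where
  "Q_edges = (\<Union>k<r. path_edges (Qs ! k))"

definition Q_down :: "nat \<Rightarrow> 'a list" where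
  "Q_down k = (if pos P (hd (Qs ! k)) < pos P (last (Qs ! k)) then rev (Qs ! k) else Qs ! k)"

lemma distinct_P: "distinct P"
  using extension by (auto simp: extension_def is_path_def)

lemma
  assumes "k < r"
  shows distinct_Q: "distinct (Qs ! k)"
    and length_Q: "2 \<le> length (Qs ! k)"
    and hd_Q_in_P: "hd (Qs ! k) \<in> set P"
    and last_Q_in_P: "last (Qs ! k) \<in> set P"
    and inner_Q_disjoint_P: "inner (Qs ! k) \<inter> set P = {}"
    and Q_edge_not_P_edge: "length (Qs ! k) = 2 \<Longrightarrow> {hd (Qs ! k), last (Qs ! k)} \<notin> path_edges P"
  using assms extension by (auto simp: extension_def is_H_path_def is_path_def)

lemma inner_Q_disjoint_Q: "k < r \<Longrightarrow> k' < r \<Longrightarrow> k \<noteq> k' \<Longrightarrow> inner (Qs ! k) \<inter> set (Qs ! k') = {}"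
  using extension by (auto simp: extension_def)

lemma short_Q_cycle: "k < r \<Longrightarrow> b k - a k + (length (Qs ! k) - 1) < l"
  using extension by (auto simp: extension_def ext_cycle_len_def a_def b_def)

lemma interlaced: "Suc k < r \<Longrightarrow> a k < a (Suc k) \<and> a (Suc k) < b k \<and> b k < b (Suc k)"
  using extension by (auto simp: extension_def a_def b_def)

lemma b_le_a_Suc_Suc: "Suc (Suc k) < r \<Longrightarrow> b k \<le> a (Suc (Suc k))"
  using extension by (auto simp: extension_def a_def b_def)

lemma pos_nth_P: "i < length P \<Longrightarrow> pos P (P ! i) = i"
  unfolding pos_def by (rule the_equality) (auto simp: distinct_P nth_eq_iff_index_eq)

lemma pos_in_P: "x \<in> set P \<Longrightarrow> pos P x < length P \<and> P ! pos P x = x"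
  by (metis in_set_conv_nth pos_nth_P)

lemma hd_Q_ne_last_Q:
  assumes "k < r"
  shows "hd (Qs ! k) \<noteq> last (Qs ! k)"
proof -
  have "Qs ! k \<noteq> []" and "0 \<noteq> length (Qs ! k) - 1"
    using length_Q[OF assms] by auto
  moreover have "Qs ! k ! 0 \<noteq> Qs ! k ! (length (Qs ! k) - 1)"
    using calculation nth_eq_iff_index_eq[OF distinct_Q[OF assms]] by simp
  ultimately show ?thesis
    by (simp add: hd_conv_nth last_conv_nth)
qed

lemma ends_Q_pos:
  assumes "k < r"
  shows "a k < b k \<and> b k < length P \<and> {P ! a k, P ! b k} = {hd (Qs ! k), last (Qs ! k)}"
proof -
  have "pos P (hd (Qs ! k)) \<noteq> pos P (last (Qs ! k))"
    using pos_in_P[OF hd_Q_in_P] pos_in_P[OF last_Q_in_P] hd_Q_ne_last_Q assms by metis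
  then show ?thesis
    using pos_in_P[OF hd_Q_in_P[OF assms]] pos_in_P[OF last_Q_in_P[OF assms]]
    by (auto simp: a_def b_def lo_def hi_def)
qed

lemma a_less_b: "k < r \<Longrightarrow> a k < b k"
  and b_less_length_P: "k < r \<Longrightarrow> b k < length P"
  and ends_Q: "k < r \<Longrightarrow> {P ! a k, P ! b k} = {hd (Qs ! k), last (Qs ! k)}"
  using ends_Q_pos by blast+

lemma set_Q: "k < r \<Longrightarrow> set (Qs ! k) = {P ! a k, P ! b k} \<union> inner (Qs ! k)"
  using set_eq_ends_Un_inner[OF length_Q] ends_Q by simp

lemma Q_down:
  assumes "k < r"
  shows "hd (Q_down k) = P ! b k \<and> last (Q_down k) = P ! a k \<and> distinct (Q_down k) \<and>
    set (Q_down k) = set (Qs ! k) \<and> path_edges (Q_down k) = path_edges (Qs ! k) \<and>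
    length (Q_down k) = length (Qs ! k)"
proof -
  have "Qs ! k \<noteq> []"
    using length_Q[OF assms] by auto
  with ends_Q_pos[OF assms] distinct_Q[OF assms] pos_in_P[OF hd_Q_in_P[OF assms]]
    pos_in_P[OF last_Q_in_P[OF assms]] show ?thesis
    by (auto simp: Q_down_def a_def b_def lo_def hi_def hd_rev last_rev)
qed

lemma a_strict_mono: "k < k' \<Longrightarrow> k' < r \<Longrightarrow> a k < a k'"
  and b_strict_mono: "k < k' \<Longrightarrow> k' < r \<Longrightarrow> b k < b k'"
  using lift_Suc_mono_less_below[of r a] lift_Suc_mono_less_below[of r b] interlaced by blast+

lemma b_le_a: "Suc (Suc k) \<le> k' \<Longrightarrow> k' < r \<Longrightarrow> b k \<le> a k'"
  using b_le_a_Suc_Suc[of k] a_strict_mono[of "Suc (Suc k)" k']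
  by (cases "k' = Suc (Suc k)") auto

lemma H_edges_eq: "E = path_edges P \<union> Q_edges"
  by (simp add: H_edges_def Q_edges_def UN_set_conv_nth)

lemma mem_H_verts_iff: "x \<in> V \<longleftrightarrow> x \<in> set P \<or> (\<exists>k<r. x \<in> set (Qs ! k))"
  by (auto simp: H_verts_def UN_set_conv_nth)

lemma P_edge_in_H: "Suc p < length P \<Longrightarrow> {P ! p, P ! Suc p} \<in> E"
  unfolding H_edges_eq path_edges_def by blast

lemma H_cycle_iff:
  "H_cycle C \<longleftrightarrow> distinct C \<and> 3 \<le> length C \<and> set C \<subseteq> V \<and> cycle_edges C \<subseteq> E"
  by (auto simp: is_cycle_in_def cycle_edges_def)

section \<open>A cycle is determined by the paths Q_k it contains\<close>

lemma H_edge_at_inner_vertex: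
  assumes k: "k < r" and t: "Suc (Suc t) < length (Qs ! k)" and e: "e \<in> E"
    and x: "Qs ! k ! Suc t \<in> e"
  shows "e = {Qs ! k ! t, Qs ! k ! Suc t} \<or> e = {Qs ! k ! Suc t, Qs ! k ! Suc (Suc t)}"
proof -
  let ?Q = "Qs ! k"
  have inner: "?Q ! Suc t \<in> inner ?Q"
    unfolding inner_conv_nth using t by (intro exI[of _ "Suc t"]) auto
  from e consider "e \<in> path_edges P" | k' where "k' < r" "e \<in> path_edges (Qs ! k')"
    unfolding H_edges_eq Q_edges_def by blast
  then show ?thesis
  proof cases
    case 1
    then show ?thesis
      using path_edge_subset_set x inner inner_Q_disjoint_P[OF k] by blast
  next
    case 2
    show ?thesis
    proof (cases "k' = k")
      case False
      then show ?thesis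
        using inner_Q_disjoint_Q[OF k 2(1)] path_edge_subset_set[OF 2(2)] x inner by auto
    next
      case True
      then obtain i where i: "e = {?Q ! i, ?Q ! Suc i}" "Suc i < length ?Q"
        using 2 unfolding path_edges_def by blast
      with x have "?Q ! Suc t = ?Q ! i \<or> ?Q ! Suc t = ?Q ! Suc i"
        by auto
      then have "Suc t = i \<or> t = i"
        using i(2) t nth_eq_iff_index_eq[OF distinct_Q[OF k]] by auto
      with i show ?thesis
        by auto
    qed
  qed
qed

text \<open>Otherwise the cut around some inner vertex of Q_k is crossed by exactly one cycle edge.\<close>

lemma Q_edges_in_cycle_all_or_none:
  assumes C: "H_cycle C" and k: "k < r"
  shows "path_edges (Qs ! k) \<subseteq> cycle_edges C \<or> path_edges (Qs ! k) \<inter> cycle_edges C = {}"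
proof (rule ccontr)
  let ?Q = "Qs ! k"
  let ?in_C = "\<lambda>t. {?Q ! t, ?Q ! Suc t} \<in> cycle_edges C"
  assume "\<not> ?thesis"
  then obtain t1 t2 where "Suc t1 < length ?Q" "?in_C t1" "Suc t2 < length ?Q" "\<not> ?in_C t2"
    unfolding path_edges_def by blast
  then have "t1 < length ?Q - 1" "t2 < length ?Q - 1" "?in_C t1 \<noteq> ?in_C t2"
    by auto
  from ex_consecutive_neq[OF this] obtain t where "Suc t < length ?Q - 1" "?in_C t \<noteq> ?in_C (Suc t)"
    by blast
  then have t: "Suc (Suc t) < length ?Q" "?in_C t \<noteq> ?in_C (Suc t)"
    by auto
  let ?x = "?Q ! Suc t"
  let ?e1 = "{?Q ! t, ?x}" and ?e2 = "{?x, ?Q ! Suc (Suc t)}"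
  have ne: "?Q ! t \<noteq> ?x" "?Q ! Suc (Suc t) \<noteq> ?x" "?Q ! t \<noteq> ?Q ! Suc (Suc t)"
    using t(1) nth_eq_iff_index_eq[OF distinct_Q[OF k]] by auto
  have "cycle_edges C \<subseteq> E"
    using C H_cycle_iff by blast
  then have "{e \<in> cycle_edges C. crosses {?x} e} = {e \<in> {?e1, ?e2}. e \<in> cycle_edges C}"
    using H_edge_at_inner_vertex[OF k t(1)] ne by (auto simp: crosses_def)
  also have "\<dots> = (if ?in_C t then {?e1} else {?e2})"
    using t(2) by auto
  finally have "card {e \<in> cycle_edges C. crosses {?x} e} = 1"
    by simp
  moreover have "even (card {e \<in> cycle_edges C. crosses {?x} e})"
    using even_card_crossing_cycle_edges C H_cycle_iff by blast
  ultimately show False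
    by simp
qed

lemma P_edge_notin_Q_edges: "e \<in> path_edges P \<Longrightarrow> e \<notin> Q_edges"
proof
  assume eP: "e \<in> path_edges P" and "e \<in> Q_edges"
  then obtain k where k: "k < r" and eQ: "e \<in> path_edges (Qs ! k)"
    unfolding Q_edges_def by blast
  let ?Q = "Qs ! k"
  obtain p where p: "e = {P ! p, P ! Suc p}" "Suc p < length P"
    using eP unfolding path_edges_def by blast
  have "P ! p \<noteq> P ! Suc p"
    using distinct_P p(2) by (simp add: nth_eq_iff_index_eq)
  moreover have "e \<subseteq> {hd ?Q, last ?Q}"
    using path_edge_subset_set[OF eQ] path_edge_subset_set[OF eP] set_eq_ends_Un_inner[OF length_Q[OF k]]
      inner_Q_disjoint_P[OF k] by blast
  ultimately have e: "e = {hd ?Q, last ?Q}"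
    using p by (auto simp: doubleton_eq_iff)
  show False
  proof (cases "length ?Q = 2")
    case True
    then show False
      using Q_edge_not_P_edge[OF k] e eP by simp
  next
    case False
    then show False
      using closing_edge_notin_path_edges[OF distinct_Q[OF k]] length_Q[OF k] e eQ
      by (simp add: insert_commute)
  qed
qed

text \<open>The only edge of P crossing the cut set (take (Suc p) P) is the one at p, and a cycle
  crosses every cut an even number of times.\<close>

lemma P_edge_in_cycle_iff:
  assumes C: "H_cycle C" and p: "Suc p < length P"
  shows "{P ! p, P ! Suc p} \<in> cycle_edges C \<longleftrightarrow>
    odd (card {e \<in> cycle_edges C \<inter> Q_edges. crosses (set (take (Suc p) P)) e})"
proof -
  let ?S = "set (take (Suc p) P)" and ?ep = "{P ! p, P ! Suc p}"
  have "?ep \<in> path_edges P"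
    using p unfolding path_edges_def by blast
  then have ep: "?ep \<notin> Q_edges"
    using P_edge_notin_Q_edges by blast
  have CE: "cycle_edges C \<subseteq> E"
    using C H_cycle_iff by blast
  have in_S: "P ! q \<in> ?S \<longleftrightarrow> q < Suc p" if "q < length P" for q
    using nth_in_set_take_iff[OF distinct_P that] .
  have crossing_P_edge: "e = ?ep" if eP: "e \<in> path_edges P" and cr: "crosses ?S e" for e
  proof -
    obtain q where "e = {P ! q, P ! Suc q}" "Suc q < length P"
      using eP unfolding path_edges_def by blast
    with cr in_S[of q] in_S[of "Suc q"] show ?thesis
      by (cases "q = p") auto
  qed
  let ?X = "{e \<in> cycle_edges C \<inter> Q_edges. crosses ?S e}"
  have "{e \<in> cycle_edges C. crosses ?S e} = ?X \<union> ({?ep} \<inter> cycle_edges C)"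
    using CE crossing_P_edge in_S[of p] in_S[of "Suc p"] p unfolding H_edges_eq by auto
  moreover have "finite ?X"
    by (simp add: cycle_edges_def)
  moreover have "?X \<inter> ({?ep} \<inter> cycle_edges C) = {}"
    using ep by blast
  ultimately have "card {e \<in> cycle_edges C. crosses ?S e} = card ?X + card ({?ep} \<inter> cycle_edges C)"
    using card_Un_disjoint[of ?X "{?ep} \<inter> cycle_edges C"] by simp
  moreover have "even (card {e \<in> cycle_edges C. crosses ?S e})"
    using even_card_crossing_cycle_edges C H_cycle_iff by blast
  ultimately show ?thesis
    by (cases "?ep \<in> cycle_edges C") auto
qed

lemma cycle_edges_eqI:
  assumes C: "H_cycle C" and D: "H_cycle D" and eq: "cycle_edges C \<inter> Q_edges = cycle_edges D \<inter> Q_edges"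
  shows "cycle_edges C = cycle_edges D"
proof -
  have "e \<in> cycle_edges D" if C: "H_cycle C" and D: "H_cycle D"
    and eq: "cycle_edges C \<inter> Q_edges = cycle_edges D \<inter> Q_edges" and e: "e \<in> cycle_edges C"
    for C D e
  proof (cases "e \<in> Q_edges")
    case False
    then have "e \<in> path_edges P"
      using e C H_cycle_iff H_edges_eq by blast
    then obtain p where "e = {P ! p, P ! Suc p}" "Suc p < length P"
      unfolding path_edges_def by blast
    then show ?thesis
      using P_edge_in_cycle_iff[OF C] P_edge_in_cycle_iff[OF D] e eq by simp
  qed (use e eq in blast)
  with assms show ?thesis
    by blast
qed

lemma cycle_meets_Q_edges:
  assumes C: "H_cycle C"
  shows "cycle_edges C \<inter> Q_edges \<noteq> {}"
proof
  assume none: "cycle_edges C \<inter> Q_edges = {}"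
  have e: "{last C, hd C} \<in> cycle_edges C"
    by (simp add: cycle_edges_def)
  then have "{last C, hd C} \<in> path_edges P"
    using none C H_cycle_iff H_edges_eq by blast
  then obtain p where "{last C, hd C} = {P ! p, P ! Suc p}" "Suc p < length P"
    unfolding path_edges_def by blast
  then show False
    using P_edge_in_cycle_iff[OF C] e none by simp
qed

definition used :: "'a list \<Rightarrow> nat set" where
  "used C = {k. k < r \<and> path_edges (Qs ! k) \<subseteq> cycle_edges C}"

lemma cycle_Q_edges_eq_used:
  assumes C: "H_cycle C"
  shows "cycle_edges C \<inter> Q_edges = (\<Union>k\<in>used C. path_edges (Qs ! k))"
proof
  show "cycle_edges C \<inter> Q_edges \<subseteq> (\<Union>k\<in>used C. path_edges (Qs ! k))"
  proof
    fix e assume "e \<in> cycle_edges C \<inter> Q_edges"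
    then obtain k where k: "k < r" "e \<in> path_edges (Qs ! k)" "e \<in> cycle_edges C"
      unfolding Q_edges_def by blast
    then have "k \<in> used C"
      using Q_edges_in_cycle_all_or_none[OF C k(1)] by (auto simp: used_def)
    with k show "e \<in> (\<Union>k\<in>used C. path_edges (Qs ! k))"
      by blast
  qed
qed (auto simp: used_def Q_edges_def)

lemma used_nonempty: "H_cycle C \<Longrightarrow> used C \<noteq> {}"
  using cycle_meets_Q_edges cycle_Q_edges_eq_used by fastforce

lemma vertex_of_used_Q: "k \<in> used C \<Longrightarrow> C \<noteq> [] \<Longrightarrow> x \<in> set (Qs ! k) \<Longrightarrow> x \<in> set C"
  using ex_path_edge_at_vertex[OF length_Q] cycle_edge_subset_set[of C] by (fastforce simp: used_def)

definition left_of :: "nat \<Rightarrow> 'a set" where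
  "left_of m = set (take (b m) P) \<union> (\<Union>k\<le>m. inner (Qs ! k))"

lemma nth_P_in_left_of_iff:
  assumes "p < length P" and "m < r"
  shows "P ! p \<in> left_of m \<longleftrightarrow> p < b m"
proof -
  have "P ! p \<notin> inner (Qs ! k)" if "k \<le> m" for k
    using inner_Q_disjoint_P[of k] that assms by auto
  then show ?thesis
    using nth_in_set_take_iff[OF distinct_P assms(1)] by (auto simp: left_of_def)
qed

lemma set_Q_left_subset_left_of:
  assumes "k \<le> m" and "m < r"
  shows "set (Qs ! k) \<subseteq> insert (P ! b m) (left_of m)"
proof -
  have kr: "k < r"
    using assms by simp
  have "b k \<le> b m"
    using b_strict_mono[of k m] assms by (cases "k = m") auto
  then have "P ! a k \<in> left_of m" "P ! b k \<in> insert (P ! b m) (left_of m)"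
    using nth_P_in_left_of_iff[of _ m] a_less_b[OF kr] b_less_length_P[OF kr] assms(2)
    by (auto simp: le_less)
  then show ?thesis
    using set_Q[OF kr] assms(1) by (auto simp: left_of_def)
qed

lemma set_Q_right_disjoint_left_of:
  assumes "Suc (Suc m) \<le> k" and "k < r"
  shows "set (Qs ! k) \<inter> left_of m = {}"
proof -
  have "P ! a k \<notin> left_of m" "P ! b k \<notin> left_of m"
    using nth_P_in_left_of_iff[of _ m] b_le_a[OF assms] a_less_b[OF assms(2)]
      b_less_length_P[OF assms(2)] assms by auto
  moreover have "x \<notin> left_of m" if x: "x \<in> inner (Qs ! k)" for x
  proof -
    have "x \<notin> inner (Qs ! k')" if "k' \<le> m" for k'
      using inner_Q_disjoint_Q[of k' k] inner_subset_set x that assms by fastforce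
    moreover have "x \<notin> set P"
      using x inner_Q_disjoint_P[OF assms(2)] by auto
    ultimately show ?thesis
      by (auto simp: left_of_def dest: in_set_takeD)
  qed
  ultimately show ?thesis
    using set_Q[OF assms(2)] by auto
qed

lemma H_edge_leaving_left_of:
  assumes m: "Suc m < r" and e: "{x, y} \<in> E" "{x, y} \<notin> path_edges (Qs ! Suc m)"
    and x: "x \<in> left_of m" and y: "y \<notin> left_of m"
  shows "y = P ! b m"
proof -
  from e consider "{x, y} \<in> path_edges P" | k where "k < r" "{x, y} \<in> path_edges (Qs ! k)"
    unfolding H_edges_eq Q_edges_def by blast
  then show ?thesis
  proof cases
    case 1
    then obtain p where "{x, y} = {P ! p, P ! Suc p}" "Suc p < length P"
      unfolding path_edges_def by blast
    with x y nth_P_in_left_of_iff[of p m] nth_P_in_left_of_iff[of "Suc p" m] m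
    have "y = P ! Suc p \<and> Suc p = b m"
      by (auto simp: doubleton_eq_iff)
    then show ?thesis
      by simp
  next
    case 2
    then have "x \<in> set (Qs ! k)" "y \<in> set (Qs ! k)" and "k \<noteq> Suc m"
      using path_edge_subset_set[OF 2(2)] e(2) by auto
    then consider "k \<le> m" | "Suc (Suc m) \<le> k"
      by linarith
    then show ?thesis
    proof cases
      case 1
      then show ?thesis
        using set_Q_left_subset_left_of[OF 1] m \<open>y \<in> set (Qs ! k)\<close> y by auto
    next
      case 2
      then show ?thesis
        using set_Q_right_disjoint_left_of[OF 2 \<open>k < r\<close>] \<open>x \<in> set (Qs ! k)\<close> x by auto
    qed
  qed
qed

text \<open>If Q_m is not used, the cycle can leave left_of (m - 1) only through v_(m-1), yet it
  has vertices on both sides other than v_(m-1).\<close>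

lemma used_interval:
  assumes C: "H_cycle C" and i: "i \<in> used C" and j: "j \<in> used C" and "i < m" "m < j"
  shows "m \<in> used C"
proof (rule ccontr)
  assume "m \<notin> used C"
  obtain m' where m: "m = Suc m'"
    using \<open>i < m\<close> by (cases m) auto
  have jr: "j < r" and ir: "i < r"
    using i j by (auto simp: used_def)
  have mr: "Suc m' < r"
    using m \<open>m < j\<close> jr by simp
  have Cne: "C \<noteq> []" and dC: "distinct C" and CE: "cycle_edges C \<subseteq> E"
    using C H_cycle_iff by auto
  have unused: "path_edges (Qs ! Suc m') \<inter> cycle_edges C = {}"
    using Q_edges_in_cycle_all_or_none[OF C mr] \<open>m \<notin> used C\<close> mr m by (auto simp: used_def)
  have bm': "b m' < length P"
    using b_less_length_P mr by simp
  have "a i < b m'"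
    using a_less_b[OF ir] b_strict_mono[of i m'] \<open>i < m\<close> m mr by (cases "i = m'") auto
  then have x: "P ! a i \<in> set C" "P ! a i \<in> left_of m'"
    using vertex_of_used_Q[OF i Cne] set_Q[OF ir] nth_P_in_left_of_iff[of "a i" m'] a_less_b[OF ir]
      b_less_length_P[OF ir] mr by auto
  have "b m' < b j"
    using b_le_a[of m' j] a_less_b[OF jr] \<open>m < j\<close> m jr by simp
  then have y: "P ! b j \<in> set C" "P ! b j \<notin> left_of m'" "P ! b j \<noteq> P ! b m'"
    using vertex_of_used_Q[OF j Cne] set_Q[OF jr] nth_P_in_left_of_iff[of "b j" m']
      b_less_length_P[OF jr] bm' mr distinct_P by (auto simp: nth_eq_iff_index_eq)
  have "P ! b m' \<notin> left_of m'"
    using nth_P_in_left_of_iff[OF bm'] mr by simp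
  then obtain u v where "{u, v} \<in> cycle_edges C" "u \<in> left_of m'" "v \<notin> left_of m'" "v \<noteq> P ! b m'"
    using cycle_edge_leaving_avoiding[OF dC _ x(1,2) y] by blast
  with CE unused H_edge_leaving_left_of[OF mr] show False
    by blast
qed

section \<open>Short cycles through consecutive paths Q_i, ..., Q_j\<close>

definition P_segment :: "nat \<Rightarrow> nat \<Rightarrow> 'a list" where
  "P_segment x y = drop x (take y P)"

lemma
  assumes "y \<le> length P"
  shows length_P_segment: "length (P_segment x y) = y - x"
    and mem_P_segment_iff: "z \<in> set (P_segment x y) \<longleftrightarrow> z \<in> set P \<and> x \<le> pos P z \<and> pos P z < y"
proof -
  show "length (P_segment x y) = y - x"
    using assms by (simp add: P_segment_def)
  show "z \<in> set (P_segment x y) \<longleftrightarrow> z \<in> set P \<and> x \<le> pos P z \<and> pos P z < y"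
  proof
    assume "z \<in> set (P_segment x y)"
    then obtain t where "t < y - x" "z = P ! (x + t)"
      using assms by (auto simp: P_segment_def in_set_conv_nth)
    with assms show "z \<in> set P \<and> x \<le> pos P z \<and> pos P z < y"
      using pos_nth_P[of "x + t"] by auto
  next
    assume "z \<in> set P \<and> x \<le> pos P z \<and> pos P z < y"
    then have "P_segment x y ! (pos P z - x) = z" "pos P z - x < length (P_segment x y)"
      using pos_in_P[of z] assms by (auto simp: P_segment_def)
    then show "z \<in> set (P_segment x y)"
      by (metis nth_mem)
  qed
qed

lemma distinct_P_segment: "distinct (P_segment x y)"
  using distinct_P by (simp add: P_segment_def)

lemma path_edges_P_segment: "path_edges (P_segment x y) \<subseteq> E"
  using path_edges_drop path_edges_take H_edges_eq by (fastforce simp: P_segment_def)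

lemma
  assumes "x < y" and "y \<le> length P"
  shows hd_P_segment: "hd (P_segment x y) = P ! x"
    and last_P_segment: "last (P_segment x y) = P ! (y - 1)"
  using assms by (simp_all add: P_segment_def hd_drop_conv_nth last_conv_nth)

text \<open>A spanning arc M for Q_i, ..., Q_j runs inside H from v_j back to the vertex P ! s
  and contains all of Q_i, ..., Q_j; the P-segment strictly between P ! s and v_j closes
  it to a cycle.\<close>

definition close_arc :: "nat \<Rightarrow> nat \<Rightarrow> 'a list \<Rightarrow> 'a list" where
  "close_arc s j M = P_segment (Suc s) (b j) @ M"

definition arc_region :: "nat \<Rightarrow> nat \<Rightarrow> nat \<Rightarrow> 'a set" where
  "arc_region i j s = {x \<in> set P. a i \<le> pos P x \<and> (pos P x \<le> s \<or> pos P x = b j)} \<union>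
     (\<Union>k\<in>{i..j}. inner (Qs ! k))"

definition spanning_arc :: "nat \<Rightarrow> nat \<Rightarrow> nat \<Rightarrow> 'a list \<Rightarrow> bool" where
  "spanning_arc i j s M \<longleftrightarrow> i \<le> j \<and> j < r \<and> a i \<le> s \<and> s < b j \<and> (Suc j < r \<longrightarrow> s \<le> a (Suc j)) \<and>
     distinct M \<and> 2 \<le> length M \<and> hd M = P ! b j \<and> last M = P ! s \<and>
     set M \<subseteq> arc_region i j s \<and> path_edges M \<subseteq> E \<and>
     (\<forall>k\<in>{i..j}. path_edges (Qs ! k) \<subseteq> path_edges M) \<and> 3 \<le> length (close_arc s j M)"

lemma spanning_arcD:
  assumes "spanning_arc i j s M"
  shows "i \<le> j" "j < r" "a i \<le> s" "s < b j" "Suc j < r \<Longrightarrow> s \<le> a (Suc j)"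
    "distinct M" "2 \<le> length M" "hd M = P ! b j" "last M = P ! s"
    "set M \<subseteq> arc_region i j s" "path_edges M \<subseteq> E"
    "k \<in> {i..j} \<Longrightarrow> path_edges (Qs ! k) \<subseteq> path_edges M" "3 \<le> length (close_arc s j M)"
  using assms by (auto simp: spanning_arc_def)

lemma length_close_arc: "j < r \<Longrightarrow> length (close_arc s j M) = b j - Suc s + length M"
  using b_less_length_P[of j] by (simp add: close_arc_def length_P_segment)

lemma P_vertex_in_arc_region:
  assumes "x \<in> arc_region i j s" and "x \<in> set P" and "j < r"
  shows "a i \<le> pos P x \<and> (pos P x \<le> s \<or> pos P x = b j)"
proof -
  have "x \<notin> inner (Qs ! k)" if "k \<in> {i..j}" for k
    using inner_Q_disjoint_P[of k] that assms(2,3) by auto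
  then show ?thesis
    using assms(1,2) by (auto simp: arc_region_def)
qed

context
  fixes i j s M
  assumes arc: "spanning_arc i j s M"
begin

lemma set_close_arc:
  "set (close_arc s j M) \<subseteq> {x \<in> set P. a i \<le> pos P x \<and> pos P x \<le> b j} \<union> (\<Union>k\<in>{i..j}. inner (Qs ! k))"
  using arc b_less_length_P[of j]
  by (auto simp: spanning_arc_def close_arc_def arc_region_def mem_P_segment_iff)

lemma close_arc_H_cycle: "H_cycle (close_arc s j M)"
proof -
  have jr: "j < r" and sb: "s < b j" and M: "distinct M" "hd M = P ! b j" "last M = P ! s"
    "2 \<le> length M" "set M \<subseteq> arc_region i j s" "path_edges M \<subseteq> E"
    and len3: "3 \<le> length (close_arc s j M)"
    using arc by (auto simp: spanning_arc_def)
  let ?S = "P_segment (Suc s) (b j)"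
  have bP: "b j < length P"
    using b_less_length_P[OF jr] .
  have "set ?S \<inter> set M = {}"
    using mem_P_segment_iff[of "b j"] bP P_vertex_in_arc_region[OF _ _ jr] M(5) by fastforce
  then have "distinct (close_arc s j M)"
    using distinct_P_segment M(1) by (simp add: close_arc_def)
  moreover have "set (close_arc s j M) \<subseteq> V"
    using set_close_arc jr inner_subset_set by (fastforce simp: mem_H_verts_iff)
  moreover have "{last ?S, hd M} \<in> E" if "?S \<noteq> []"
  proof -
    have "Suc s < b j"
      using that bP by (simp add: P_segment_def)
    then show ?thesis
      using last_P_segment[of "Suc s" "b j"] bP P_edge_in_H[of "b j - 1"] M(2) by simp
  qed
  then have "path_edges (close_arc s j M) \<subseteq> E"
    using path_edges_P_segment M(6) by (auto simp: close_arc_def path_edges_append)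
  moreover have "{last (close_arc s j M), hd (close_arc s j M)} \<in> E"
  proof -
    have "hd (close_arc s j M) = P ! Suc s"
    proof (cases "Suc s < b j")
      case True
      then show ?thesis
        using hd_P_segment[of "Suc s" "b j"] length_P_segment[of "b j" "Suc s"] bP
        by (auto simp: close_arc_def hd_append)
    next
      case False
      then have "b j = Suc s"
        using sb by simp
      then show ?thesis
        using M(2) by (simp add: close_arc_def P_segment_def)
    qed
    moreover have "last (close_arc s j M) = P ! s"
      using M(3,4) by (auto simp: close_arc_def last_append)
    ultimately show ?thesis
      using P_edge_in_H[of s] sb bP by simp
  qed
  ultimately show ?thesis
    using len3 by (simp add: H_cycle_iff cycle_edges_def)
qed

lemma used_close_arc: "used (close_arc s j M) = {i..j}"
proof -
  let ?D = "close_arc s j M"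
  have jr: "j < r" and ij: "i \<le> j"
    using arc by (auto simp: spanning_arc_def)
  have Q_in: "path_edges (Qs ! k) \<subseteq> cycle_edges ?D" if "k \<in> {i..j}" for k
    using arc that path_edges_append[of "P_segment (Suc s) (b j)" M]
    by (auto simp: spanning_arc_def close_arc_def cycle_edges_def)
  have "{i..j} \<subseteq> used ?D"
    unfolding used_def using Q_in jr by force
  moreover have "used ?D \<subseteq> {i..j}"
  proof
    fix k assume k: "k \<in> used ?D"
    then have kr: "k < r"
      by (simp add: used_def)
    have Dne: "?D \<noteq> []"
      using close_arc_H_cycle H_cycle_iff by auto
    have pos: "a i \<le> p \<and> p \<le> b j" if "p < length P" "P ! p \<in> set (Qs ! k)" for p
    proof -
      have "P ! p \<in> set ?D"
        using vertex_of_used_Q[OF k Dne that(2)] .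
      moreover have "P ! p \<notin> inner (Qs ! k')" if "k' \<le> j" for k'
        using inner_Q_disjoint_P[of k'] that jr \<open>p < length P\<close> by auto
      ultimately show ?thesis
        using set_close_arc pos_nth_P[OF \<open>p < length P\<close>] by fastforce
    qed
    have "a i \<le> a k" and "b k \<le> b j"
      using pos[of "a k"] pos[of "b k"] set_Q[OF kr] a_less_b[OF kr] b_less_length_P[OF kr] by auto
    then show "k \<in> {i..j}"
      using a_strict_mono[of k i] b_strict_mono[of j k] ij jr kr by force
  qed
  ultimately show ?thesis
    by blast
qed

end

lemma spanning_arc_base:
  assumes i: "i < r"
  shows "spanning_arc i i (a i) (Q_down i)" and "length (close_arc (a i) i (Q_down i)) < l"
proof -
  have Q: "hd (Q_down i) = P ! b i" "last (Q_down i) = P ! a i" "distinct (Q_down i)"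
    "set (Q_down i) = set (Qs ! i)" "path_edges (Q_down i) = path_edges (Qs ! i)"
    "length (Q_down i) = length (Qs ! i)"
    using Q_down[OF i] by auto
  have ab: "a i < b i" "b i < length P"
    using a_less_b[OF i] b_less_length_P[OF i] .
  have len: "length (close_arc (a i) i (Q_down i)) = b i - Suc (a i) + length (Qs ! i)"
    using length_close_arc[OF i] Q by simp
  with short_Q_cycle[OF i] ab length_Q[OF i]
  show "length (close_arc (a i) i (Q_down i)) < l"
    by simp
  have "3 \<le> length (close_arc (a i) i (Q_down i))"
  proof (cases "length (Qs ! i) = 2")
    case True
    have "b i \<noteq> Suc (a i)"
    proof
      assume eq: "b i = Suc (a i)"
      then have "{P ! a i, P ! Suc (a i)} \<in> path_edges P"
        using ab unfolding path_edges_def by auto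
      then show False
        using Q_edge_not_P_edge[OF i True] ends_Q[OF i] eq by simp
    qed
    with len True ab show ?thesis
      by simp
  qed (use len length_Q[OF i] in simp)
  moreover have "set (Q_down i) \<subseteq> arc_region i i (a i)"
    using Q(4) set_Q[OF i] pos_nth_P ab by (auto simp: arc_region_def)
  moreover have "path_edges (Q_down i) \<subseteq> E"
    using Q(5) i unfolding H_edges_eq Q_edges_def by blast
  moreover have "Suc i < r \<Longrightarrow> a i \<le> a (Suc i)"
    using interlaced[of i] by simp
  ultimately show "spanning_arc i i (a i) (Q_down i)"
    using Q ab i length_Q[OF i] by (simp add: spanning_arc_def)
qed

lemma set_butlast_Q_down: "k < r \<Longrightarrow> set (butlast (Q_down k)) = insert (P ! b k) (inner (Qs ! k))"
  using Q_down[of k] set_butlast_distinct[of "Q_down k"] set_Q[of k] inner_Q_disjoint_P[of k]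
    a_less_b[of k] b_less_length_P[of k] distinct_P
  by (auto simp: nth_eq_iff_index_eq)

lemma Q_down_snoc: "k < r \<Longrightarrow> butlast (Q_down k) @ [P ! a k] = Q_down k"
  using Q_down[of k] length_Q[of k] by (metis append_butlast_last_id list.size(3) not_numeral_le_zero)

text \<open>The arc M is extended by Q_(j+1), traversed from v_(j+1) to u_(j+1), and the path
  P back from u_(j+1) to P ! s, where M ends; the result runs from v_(j+1) to v_j.\<close>

definition extend_arc :: "nat \<Rightarrow> nat \<Rightarrow> 'a list \<Rightarrow> 'a list" where
  "extend_arc j s M = butlast (Q_down (Suc j)) @ rev (P_segment (Suc s) (Suc (a (Suc j)))) @ rev M"

context
  fixes i j s M
  assumes arc: "spanning_arc i j s M" and next_Q: "Suc j < r"
begin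

lemma distinct_extend_arc: "distinct (extend_arc j s M)"
proof -
  note M = spanning_arcD[OF arc]
  let ?Ps = "P_segment (Suc s) (Suc (a (Suc j)))"
  have AP: "Suc (a (Suc j)) \<le> length P" and I: "a j < a (Suc j)" "a (Suc j) < b j" "b j < b (Suc j)"
    using a_less_b[OF next_Q] b_less_length_P[OF next_Q] interlaced[OF next_Q] by auto
  have M_P: "a i \<le> pos P x \<and> (pos P x \<le> s \<or> pos P x = b j)" if "x \<in> set M" "x \<in> set P" for x
    using P_vertex_in_arc_region[of x i j s] M(2,10) that by auto
  have M_inner: "\<exists>k\<in>{i..j}. x \<in> inner (Qs ! k)" if "x \<in> set M" "x \<notin> set P" for x
    using M(10) that by (auto simp: arc_region_def)
  have "set ?Ps \<inter> set M = {}"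
    using mem_P_segment_iff[OF AP] M_P I by fastforce
  moreover have "P ! b (Suc j) \<notin> set ?Ps \<union> set M"
    using mem_P_segment_iff[OF AP] M_P[of "P ! b (Suc j)"] pos_nth_P b_less_length_P[OF next_Q]
      a_less_b[OF next_Q] I M(4) by fastforce
  moreover have "x \<notin> set ?Ps \<union> set M" if "x \<in> inner (Qs ! Suc j)" for x
  proof -
    have "x \<notin> set P"
      using that inner_Q_disjoint_P[OF next_Q] by auto
    moreover have "x \<notin> set (Qs ! k)" if "k \<le> j" for k
      using inner_Q_disjoint_Q[OF next_Q, of k] that next_Q \<open>x \<in> inner (Qs ! Suc j)\<close> by auto
    ultimately show ?thesis
      using mem_P_segment_iff[OF AP] M_inner inner_subset_set by fastforce
  qed
  ultimately show ?thesis
    using set_butlast_Q_down[OF next_Q] distinct_butlast Q_down[OF next_Q] distinct_P_segment M(6)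
    by (auto simp: extend_arc_def)
qed

lemma extend_arc_ends_length:
  "hd (extend_arc j s M) = P ! b (Suc j) \<and> last (extend_arc j s M) = P ! b j \<and>
   length (extend_arc j s M) = (length (Qs ! Suc j) - 1) + (a (Suc j) - s) + length M"
proof -
  note M = spanning_arcD[OF arc]
  have "2 \<le> length (Q_down (Suc j))" "Suc (a (Suc j)) \<le> length P"
    using Q_down[OF next_Q] length_Q[OF next_Q] a_less_b[OF next_Q] b_less_length_P[OF next_Q] by auto
  moreover have "butlast (Q_down (Suc j)) \<noteq> []" "M \<noteq> []"
    using calculation(1) M(7) by (auto simp flip: length_greater_0_conv)
  ultimately show ?thesis
    using hd_butlast[of "Q_down (Suc j)"] Q_down[OF next_Q] M(8)
    by (auto simp: extend_arc_def length_P_segment last_rev)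
qed

lemma set_extend_arc: "set (extend_arc j s M) \<subseteq> arc_region i (Suc j) (b j)"
proof -
  note M = spanning_arcD[OF arc]
  have AP: "Suc (a (Suc j)) \<le> length P" and I: "a (Suc j) < b j"
    using a_less_b[OF next_Q] b_less_length_P[OF next_Q] interlaced[OF next_Q] by auto
  have "arc_region i j s \<subseteq> arc_region i (Suc j) (b j)"
    using M(4) by (auto simp: arc_region_def)
  moreover have "set (P_segment (Suc s) (Suc (a (Suc j)))) \<subseteq> arc_region i (Suc j) (b j)"
    using mem_P_segment_iff[OF AP] M(3) I by (auto simp: arc_region_def)
  moreover have "set (butlast (Q_down (Suc j))) \<subseteq> arc_region i (Suc j) (b j)"
    using set_butlast_Q_down[OF next_Q] b_less_length_P[OF next_Q] pos_nth_P M(1,3,4)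
      interlaced[OF next_Q] by (auto simp: arc_region_def)
  ultimately show ?thesis
    using M(10) by (auto simp: extend_arc_def)
qed

lemma path_edges_extend_arc:
  "path_edges (extend_arc j s M) =
     path_edges (Qs ! Suc j) \<union> path_edges (rev (P_segment (Suc s) (Suc (a (Suc j)))) @ rev M)"
proof -
  note M = spanning_arcD[OF arc]
  let ?R = "rev (P_segment (Suc s) (Suc (a (Suc j)))) @ rev M"
  have "hd ?R = P ! a (Suc j)"
  proof (cases "s < a (Suc j)")
    case True
    then show ?thesis
      using last_P_segment[of "Suc s" "Suc (a (Suc j))"] a_less_b[OF next_Q] b_less_length_P[OF next_Q]
        length_P_segment[of "Suc (a (Suc j))" "Suc s"]
      by (auto simp: hd_append hd_rev simp flip: length_greater_0_conv)
  next
    case False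
    then have "s = a (Suc j)"
      using M(5) next_Q by simp
    then show ?thesis
      using M(7,9) by (auto simp: P_segment_def hd_rev)
  qed
  moreover have "?R \<noteq> []"
    using M(7) by auto
  ultimately show ?thesis
    using path_edges_append_nonempty[of ?R "butlast (Q_down (Suc j))"] Q_down_snoc[OF next_Q]
      Q_down[OF next_Q] by (simp add: extend_arc_def)
qed

lemma spanning_arc_extend: "spanning_arc i (Suc j) (b j) (extend_arc j s M)"
proof -
  note M = spanning_arcD[OF arc]
  let ?Ps = "P_segment (Suc s) (Suc (a (Suc j)))"
  have AP: "Suc (a (Suc j)) \<le> length P"
    using a_less_b[OF next_Q] b_less_length_P[OF next_Q] by auto
  have "{last (rev ?Ps), hd (rev M)} \<in> E" if "?Ps \<noteq> []"
  proof -
    have "s < a (Suc j)"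
      using that AP by (simp add: P_segment_def)
    then show ?thesis
      using hd_P_segment[of "Suc s" "Suc (a (Suc j))"] AP M(7,9) P_edge_in_H[of s]
      by (auto simp: last_rev hd_rev insert_commute simp flip: length_greater_0_conv)
  qed
  then have R: "path_edges (rev ?Ps @ rev M) \<subseteq> E" "path_edges M \<subseteq> path_edges (rev ?Ps @ rev M)"
    using path_edges_P_segment M(11) by (auto simp: path_edges_append)
  have "path_edges (extend_arc j s M) \<subseteq> E"
    using R path_edges_extend_arc next_Q unfolding H_edges_eq Q_edges_def by blast
  moreover have "path_edges (Qs ! k) \<subseteq> path_edges (extend_arc j s M)" if "k \<in> {i..Suc j}" for k
    using that M(12)[of k] R path_edges_extend_arc by (cases "k = Suc j") auto
  moreover have "3 \<le> length (close_arc (b j) (Suc j) (extend_arc j s M))"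
    using length_close_arc[OF next_Q] extend_arc_ends_length length_Q[OF next_Q] M(7) by simp
  moreover have "Suc (Suc j) < r \<Longrightarrow> b j \<le> a (Suc (Suc j))"
    using b_le_a_Suc_Suc by simp
  ultimately show ?thesis
    using M(1-4,7) extend_arc_ends_length distinct_extend_arc set_extend_arc next_Q
      interlaced[OF next_Q] length_Q[OF next_Q]
    by (simp add: spanning_arc_def)
qed

text \<open>Closing the extended arc adds the short cycle through Q_(j+1) and removes the
  P-segment between u_(j+1) and v_j twice.\<close>

lemma length_close_extend_arc:
  "length (close_arc (b j) (Suc j) (extend_arc j s M)) + 2 * (b j - a (Suc j)) =
     length (close_arc s j M) + (b (Suc j) - a (Suc j) + (length (Qs ! Suc j) - 1))"
proof -
  note M = spanning_arcD[OF arc]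
  have "length (close_arc (b j) (Suc j) (extend_arc j s M)) =
      b (Suc j) - Suc (b j) + ((length (Qs ! Suc j) - 1) + (a (Suc j) - s) + length M)"
    using length_close_arc[OF next_Q] extend_arc_ends_length by simp
  moreover have "length (close_arc s j M) = b j - Suc s + length M"
    using length_close_arc[OF M(2)] .
  ultimately show ?thesis
    using M(4,5) next_Q interlaced[OF next_Q] length_Q[OF next_Q] by arith
qed

end

lemma short_spanning_arc_exists:
  assumes long: "\<forall>C. H_cycle C \<and> l \<le> length C \<longrightarrow> 2 * l \<le> length C"
    and "i \<le> j" "j < r"
  shows "\<exists>s M. spanning_arc i j s M \<and> length (close_arc s j M) < l"
  using assms(2,3)
proof (induction j rule: dec_induct)
  case base
  then show ?case
    using spanning_arc_base by blast
next
  case (step n)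
  then obtain s M where arc: "spanning_arc i n s M" and short: "length (close_arc s n M) < l"
    by auto
  have next_Q: "Suc n < r"
    using step.prems .
  let ?D = "close_arc (b n) (Suc n) (extend_arc n s M)"
  have "H_cycle ?D"
    using close_arc_H_cycle[OF spanning_arc_extend[OF arc next_Q]] .
  moreover have "length ?D < 2 * l"
    using length_close_extend_arc[OF arc next_Q] short short_Q_cycle[OF next_Q]
      interlaced[OF next_Q] by linarith
  ultimately have "length ?D < l"
    using long by (meson not_le)
  then show ?case
    using spanning_arc_extend[OF arc next_Q] by blast
qed

lemma H_cycle_short:
  assumes long: "\<forall>C. H_cycle C \<and> l \<le> length C \<longrightarrow> 2 * l \<le> length C" and C: "H_cycle C"
  shows "length C < l"
proof -
  have "finite (used C)"
    by (rule finite_subset[of _ "{..<r}"]) (auto simp: used_def)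
  define i where "i = Min (used C)"
  define j where "j = Max (used C)"
  have i: "i \<in> used C" and j: "j \<in> used C" and "i \<le> j"
    using used_nonempty[OF C] \<open>finite (used C)\<close> by (auto simp: i_def j_def)
  have "used C \<subseteq> {i..j}"
    using \<open>finite (used C)\<close> by (auto simp: i_def j_def)
  moreover have "{i..j} \<subseteq> used C"
    using used_interval[OF C i j] i j by (fastforce simp: le_less)
  ultimately have used: "used C = {i..j}"
    by blast
  obtain s M where arc: "spanning_arc i j s M" and short: "length (close_arc s j M) < l"
    using short_spanning_arc_exists[OF long \<open>i \<le> j\<close>] j by (auto simp: used_def)
  have D: "H_cycle (close_arc s j M)"
    using close_arc_H_cycle[OF arc] .
  have "cycle_edges C = cycle_edges (close_arc s j M)"
    using cycle_edges_eqI[OF C D] cycle_Q_edges_eq_used[OF C] cycle_Q_edges_eq_used[OF D]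
      used used_close_arc[OF arc] by simp
  then have "length C = length (close_arc s j M)"
    using card_cycle_edges C D unfolding H_cycle_iff by metis
  with short show ?thesis
    by simp
qed

end

theorem lemma3:
  fixes l :: nat and P :: "'a list" and Qs :: "'a list list"
  assumes "l > 0"
    and "extension l P Qs"
    and "\<forall>C. is_cycle_in (H_verts P Qs) (H_edges P Qs) C \<and> length C \<ge> l
              \<longrightarrow> length C \<ge> 2 * l"
  shows "\<forall>C. is_cycle_in (H_verts P Qs) (H_edges P Qs) C \<longrightarrow> length C < l"
proof -
  interpret extension_graph l P Qs
    using assms(2) by unfold_locales
  show ?thesis
    using H_cycle_short assms(3) by blast
qed

end
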